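(* Let $Q_X$ be a distribution on a set $\mathcal A$ and $R_{XY}$ a distribution on $\mathcal A\times\mathcal B$, with $X$-marginal $R_X$ and conditional distribution $R_{Y|X}$. For any $a_1,a_2>0$, $$\operatorname*{argmin}_{P_{XY}}\big(a_1D(P_X\|Q_X)+a_2D(P_{XY}\|R_{XY})\big)=P^\star_{XY},$$ where $P^\star_X=(Q_X,R_X)_{\frac{a_1}{a_1+a_2}}$ and $P^\star_{Y|X}=R_{Y|X}$ (here $P_X$ denotes the $X$-marginal of $P_{XY}$).
   Context: $D$ is relative entropy (KL divergence). For $P\ll R$, $\imath_{P\|R}=\log\frac{\mathrm dP}{\mathrm dR}$; the Rényi divergence of order $\lambda\in(0,1)$ is $D_\lambda(P\|Q)=\frac1{\lambda-1}\log\mathbb E_R[\exp(\lambda\imath_{P\|R}+(1-\lambda)\imath_{Q\|R})]$ for any $R$ dominating $P,Q$. The tilted distribution $(P,Q)_\lambda$, $\lambda\in[0,1]$, is defined by $\imath_{(P,Q)_\lambda\|R}=\lambda\imath_{P\|R}+(1-\lambda)\imath_{Q\|R}+(1-\lambda)D_\lambda(P\|Q)$, i.e. it has density proportional to $(\frac{\mathrm dP}{\mathrm dR})^\lambda(\frac{\mathrm dQ}{\mathrm dR})^{1-\lambda}$ w.r.t. $R$. *)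

theory Defs
  imports "HOL-Probability.Probability"
begin

text \<open>Relative entropy (natural logarithm), with value +infinity when P is not
  absolutely continuous w.r.t. Q or the log-likelihood ratio is not P-integrable
  (in which case the integral of its positive part is infinite).\<close>
definition kl_div :: "'a measure \<Rightarrow> 'a measure \<Rightarrow> ereal" where
  "kl_div P Q =
     (if sets P = sets Q \<and> absolutely_continuous Q P \<and>
         integrable P (\<lambda>x. ln (enn2real (RN_deriv Q P x)))
      then ereal (\<integral>x. ln (enn2real (RN_deriv Q P x)) \<partial>P)
      else \<infinity>)"

definition tilted :: "real \<Rightarrow> 'a measure \<Rightarrow> 'a measure \<Rightarrow> 'a measure \<Rightarrow> bool" where
  "tilted lam P Q T \<longleftrightarrow>
     (\<exists>mu f g. sigma_finite_measure mu \<and>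
        f \<in> borel_measurable mu \<and> g \<in> borel_measurable mu \<and>
        (\<forall>x\<in>space mu. 0 \<le> f x \<and> 0 \<le> g x) \<and>
        P = density mu (\<lambda>x. ennreal (f x)) \<and> Q = density mu (\<lambda>x. ennreal (g x)) \<and>
        (let Z = (\<integral>\<^sup>+x. ennreal (f x powr lam * g x powr (1 - lam)) \<partial>mu) in
           0 < Z \<and> Z < \<infinity> \<and>
           T = density mu (\<lambda>x. ennreal (f x powr lam * g x powr (1 - lam)) / Z)))"

definition kcomp :: "'a measure \<Rightarrow> 'b measure \<Rightarrow> 'a measure \<Rightarrow> ('a \<Rightarrow> 'b measure) \<Rightarrow> ('a \<times> 'b) measure" where
  "kcomp MA MB PX K = PX \<bind> (\<lambda>x. distr (K x) (MA \<Otimes>\<^sub>M MB) (\<lambda>y. (x, y)))"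

end

theory Submission
  imports Defs
begin

text \<open>Let \<open>\<mu>\<close> dominate \<open>Q\<^sub>X\<close> and \<open>R\<^sub>X\<close> with densities \<open>q\<close>, \<open>r\<close>, and let
  \<open>t = q\<^sup>\<lambda> r\<^sup>1\<^sup>-\<^sup>\<lambda> / z\<close>, \<open>\<lambda> = a\<^sub>1 / (a\<^sub>1 + a\<^sub>2)\<close>, be the density of the tilted marginal \<open>T\<close>.
  Pointwise \<open>a\<^sub>1 ln (t/q) + a\<^sub>2 ln (t/r) = - (a\<^sub>1 + a\<^sub>2) ln z\<close>, so the joint law with marginal \<open>T\<close>
  and conditional \<open>R\<^sub>Y\<^sub>|\<^sub>X\<close> has objective value \<open>- (a\<^sub>1 + a\<^sub>2) ln z\<close>. For any \<open>P\<close> of finite objective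
  let \<open>p = dP\<^sub>X/dQ\<^sub>X\<close> and \<open>h = dP/dR\<^sub>X\<^sub>Y\<close>; then
  \<open>a\<^sub>1 ln p + a\<^sub>2 ln h + (a\<^sub>1 + a\<^sub>2) ln z = - a\<^sub>2 ln u - (a\<^sub>1 + a\<^sub>2) ln v\<close> with \<open>u = q p / (r h)\<close> and
  \<open>v = t / (q p)\<close>, both of \<open>P\<close>-integral at most \<open>1\<close>. Gibbs' inequality gives the lower bound, and
  equality forces \<open>u = v = 1\<close> almost surely: then \<open>P\<^sub>X = T\<close> and \<open>dP/dR\<^sub>X\<^sub>Y\<close> depends on \<open>x\<close> only,
  which means that \<open>P\<close> has conditional \<open>R\<^sub>Y\<^sub>|\<^sub>X\<close>.\<close>

lemma prob_space_eq_if_emeasure_le: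
  assumes P: "prob_space P" and sets_N: "sets N = sets P" and N_le_1: "emeasure N (space N) \<le> 1"
    and le: "\<And>A. A \<in> sets P \<Longrightarrow> emeasure P A \<le> emeasure N A"
  shows "P = N"
proof -
  interpret P: prob_space P by fact
  have space_N: "space N = space P" using sets_N by (rule sets_eq_imp_space_eq)
  interpret N: finite_measure N
    by (rule finite_measureI) (use N_le_1 in \<open>auto simp: top_unique\<close>)
  have measure_le: "measure P A \<le> measure N A" if "A \<in> sets P" for A
    using le[OF that] by (simp add: P.emeasure_eq_measure N.emeasure_eq_measure)
  show ?thesis
  proof (rule measure_eqI)
    fix A assume A: "A \<in> sets P"
    have "measure N A = measure N (space N) - measure N (space N - A)"
      using N.finite_measure_compl[of A] A sets_N space_N by simp
    also have "\<dots> \<le> 1 - measure P (space P - A)"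
      using measure_le[of "space P - A"] A N_le_1 space_N by (simp add: N.emeasure_eq_measure)
    also have "\<dots> = measure P A" using A by (simp add: P.prob_compl)
    finally have "measure P A = measure N A" using measure_le[OF A] by simp
    then show "emeasure P A = emeasure N A"
      by (simp add: P.emeasure_eq_measure N.emeasure_eq_measure)
  qed (use sets_N in simp)
qed

lemma density_eq_if_AE_le:
  assumes [measurable]: "f \<in> borel_measurable M" "g \<in> borel_measurable M"
    and prob: "prob_space (density M f)" and g_le_1: "(\<integral>\<^sup>+x. g x \<partial>M) \<le> 1"
    and le: "AE x in M. f x \<le> g x"
  shows "density M f = density M g"
proof (rule prob_space_eq_if_emeasure_le[OF prob])
  show "emeasure (density M g) (space (density M g)) \<le> 1"
  proof -
    have "emeasure (density M g) (space M) = (\<integral>\<^sup>+x. g x \<partial>M)"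
      by (subst emeasure_density) (auto intro!: nn_integral_cong)
    then show ?thesis using g_le_1 by simp
  qed
  fix A assume "A \<in> sets (density M f)"
  then show "emeasure (density M f) A \<le> emeasure (density M g) A"
    using le by (auto simp: emeasure_density intro!: nn_integral_mono_AE mult_right_mono)
qed simp

lemma nn_integral_density_divide_le:
  fixes f g :: "'a \<Rightarrow> real"
  assumes [measurable]: "f \<in> borel_measurable M" "g \<in> borel_measurable M"
    and nonneg: "\<And>x. x \<in> space M \<Longrightarrow> 0 \<le> f x" "\<And>x. x \<in> space M \<Longrightarrow> 0 \<le> g x"
  shows "(\<integral>\<^sup>+x. ennreal (g x / f x) \<partial>density M (\<lambda>x. ennreal (f x))) \<le> (\<integral>\<^sup>+x. ennreal (g x) \<partial>M)"
proof -
  have "(\<integral>\<^sup>+x. ennreal (g x / f x) \<partial>density M (\<lambda>x. ennreal (f x)))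
      = (\<integral>\<^sup>+x. ennreal (f x) * ennreal (g x / f x) \<partial>M)"
    by (rule nn_integral_density) auto
  also have "\<dots> \<le> (\<integral>\<^sup>+x. ennreal (g x) \<partial>M)"
  proof (rule nn_integral_mono)
    fix x assume "x \<in> space M"
    then have "f x * (g x / f x) \<le> g x" using nonneg by (cases "f x = 0") auto
    then show "ennreal (f x) * ennreal (g x / f x) \<le> ennreal (g x)"
      using nonneg \<open>x \<in> space M\<close> by (simp add: ennreal_mult'[symmetric] ennreal_leI)
  qed
  finally show ?thesis .
qed

lemma integrable_density_divide:
  fixes f g :: "'a \<Rightarrow> real"
  assumes [measurable]: "f \<in> borel_measurable M" "g \<in> borel_measurable M"
    and nonneg: "\<And>x. x \<in> space M \<Longrightarrow> 0 \<le> f x" "\<And>x. x \<in> space M \<Longrightarrow> 0 \<le> g x"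
    and "integrable M g"
  shows "integrable (density M (\<lambda>x. ennreal (f x))) (\<lambda>x. g x / f x)"
proof (rule integrableI_nonneg)
  have "(\<integral>\<^sup>+x. ennreal (g x) \<partial>M) < \<infinity>"
    using \<open>integrable M g\<close> nonneg by (auto simp: integrable_iff_bounded cong: nn_integral_cong)
  then show "(\<integral>\<^sup>+x. ennreal (g x / f x) \<partial>density M (\<lambda>x. ennreal (f x))) < \<infinity>"
    using nn_integral_density_divide_le[OF assms(1-4)] by (rule le_less_trans[rotated])
qed (use nonneg in \<open>auto simp: AE_density\<close>)

lemma density_density_divide:
  fixes f g :: "'a \<Rightarrow> real"
  assumes [measurable]: "f \<in> borel_measurable M" "g \<in> borel_measurable M"
    and nonneg: "\<And>x. x \<in> space M \<Longrightarrow> 0 \<le> f x"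
    and support: "\<And>x. x \<in> space M \<Longrightarrow> f x = 0 \<Longrightarrow> g x = 0"
  shows "density (density M (\<lambda>x. ennreal (f x))) (\<lambda>x. ennreal (g x / f x)) = density M (\<lambda>x. ennreal (g x))"
proof -
  have "density (density M (\<lambda>x. ennreal (f x))) (\<lambda>x. ennreal (g x / f x))
      = density M (\<lambda>x. ennreal (f x) * ennreal (g x / f x))"
    by (subst density_density_eq) auto
  also have "\<dots> = density M (\<lambda>x. ennreal (g x))"
  proof (intro density_cong AE_I2)
    fix x assume "x \<in> space M"
    then show "ennreal (f x) * ennreal (g x / f x) = ennreal (g x)"
      using nonneg support by (cases "f x = 0") (auto simp: ennreal_mult'[symmetric])
  qed auto
  finally show ?thesis .
qed

lemma integrable_if_prob_space_density:
  fixes f :: "'a \<Rightarrow> real"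
  assumes "prob_space (density M (\<lambda>x. ennreal (f x)))" "f \<in> borel_measurable M"
    and "\<And>x. x \<in> space M \<Longrightarrow> 0 \<le> f x"
  shows "integrable M f"
proof (rule integrableI_nonneg)
  interpret prob_space "density M (\<lambda>x. ennreal (f x))" by fact
  show "(\<integral>\<^sup>+x. ennreal (f x) \<partial>M) < \<infinity>"
    using emeasure_space_1 assms(2) by (subst (asm) emeasure_density) (auto cong: nn_integral_cong)
qed (use assms in auto)

lemma integrable_if_bounded_below_and_affine_sum:
  fixes f g F G :: "'a \<Rightarrow> real"
  assumes "finite_measure M" and [measurable]: "f \<in> borel_measurable M"
    and "integrable M F" "integrable M G"
    and lower: "AE x in M. F x \<le> f x" "AE x in M. G x \<le> g x"
    and "0 < a" "0 < b" and affine: "AE x in M. a * f x + b * g x = c"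
  shows "integrable M f"
proof (rule Bochner_Integration.integrable_bound)
  interpret finite_measure M by fact
  show "integrable M (\<lambda>x. \<bar>F x\<bar> + \<bar>c / a\<bar> + b / a * \<bar>G x\<bar>)"
    using assms(3,4) by auto
  show "AE x in M. norm (f x) \<le> norm (\<bar>F x\<bar> + \<bar>c / a\<bar> + b / a * \<bar>G x\<bar>)"
    using lower(1) lower(2) affine
  proof eventually_elim
    case (elim x)
    then have "f x = c / a - b / a * g x" using \<open>0 < a\<close> by (simp add: field_simps)
    moreover have "b / a * G x \<le> b / a * g x"
      using elim \<open>0 < a\<close> \<open>0 < b\<close> by (intro mult_left_mono) auto
    moreover have "b / a * - \<bar>G x\<bar> \<le> b / a * G x"
      using \<open>0 < a\<close> \<open>0 < b\<close> by (intro mult_left_mono) auto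
    moreover have "0 \<le> b / a * \<bar>G x\<bar>" using \<open>0 < a\<close> \<open>0 < b\<close> by simp
    ultimately have "\<bar>f x\<bar> \<le> \<bar>F x\<bar> + \<bar>c / a\<bar> + b / a * \<bar>G x\<bar>"
      using elim abs_ge_self[of "F x"] abs_ge_minus_self[of "F x"] abs_ge_self[of "c / a"]
      unfolding abs_le_iff by (intro conjI; linarith)
    then show ?case by simp
  qed
qed simp

lemma integrable_integral_le_1_if_nn_integral_le_1:
  fixes u :: "'a \<Rightarrow> real"
  assumes [measurable]: "u \<in> borel_measurable M" and nonneg: "AE x in M. 0 \<le> u x"
    and le_1: "(\<integral>\<^sup>+x. ennreal (u x) \<partial>M) \<le> 1"
  shows "integrable M u" "(\<integral>x. u x \<partial>M) \<le> 1"
proof -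
  show "integrable M u"
    using le_1 nonneg by (intro integrableI_nonneg) (auto simp: top_unique less_top[symmetric])
  have "(\<integral>x. u x \<partial>M) = enn2real (\<integral>\<^sup>+x. ennreal (u x) \<partial>M)"
    by (rule integral_eq_nn_integral) (use nonneg in auto)
  also have "\<dots> \<le> 1" using le_1 by (simp add: enn2real_leI)
  finally show "(\<integral>x. u x \<partial>M) \<le> 1" .
qed

text \<open>The two densities are treated together because only the combination of their logarithms is
  assumed integrable; the defect \<open>b (u - 1 - ln u) + c (v - 1 - ln v)\<close> is then integrable,
  nonnegative, and has integral at most \<open>- \<integral> (b ln u + c ln v)\<close>.\<close>
lemma gibbs_inequality_two_densities:
  fixes u v :: "'a \<Rightarrow> real"
  assumes "prob_space P" and [measurable]: "u \<in> borel_measurable P" "v \<in> borel_measurable P"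
    and pos: "AE x in P. 0 < u x \<and> 0 < v x"
    and u_le_1: "(\<integral>\<^sup>+x. ennreal (u x) \<partial>P) \<le> 1" and v_le_1: "(\<integral>\<^sup>+x. ennreal (v x) \<partial>P) \<le> 1"
    and b: "0 < b" and c: "0 < c"
    and int: "integrable P (\<lambda>x. b * ln (u x) + c * ln (v x))"
  shows "(\<integral>x. b * ln (u x) + c * ln (v x) \<partial>P) \<le> 0"
    and "(\<integral>x. b * ln (u x) + c * ln (v x) \<partial>P) = 0 \<Longrightarrow> AE x in P. u x = 1 \<and> v x = 1"
proof -
  interpret prob_space P by fact
  have u: "integrable P u" "(\<integral>x. u x \<partial>P) \<le> 1"
    using pos u_le_1 by (auto intro: integrable_integral_le_1_if_nn_integral_le_1)
  have v: "integrable P v" "(\<integral>x. v x \<partial>P) \<le> 1"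
    using pos v_le_1 by (auto intro: integrable_integral_le_1_if_nn_integral_le_1)
  define defect where "defect x = b * (u x - 1 - ln (u x)) + c * (v x - 1 - ln (v x))" for x
  have defect_eq: "defect x = b * u x + c * v x - (b + c) - (b * ln (u x) + c * ln (v x))" for x
    unfolding defect_def by (simp add: algebra_simps)
  have int_defect: "integrable P defect"
    unfolding defect_eq using u v int by auto
  have integral_defect: "(\<integral>x. defect x \<partial>P) =
      b * (\<integral>x. u x \<partial>P) + c * (\<integral>x. v x \<partial>P) - (b + c) - (\<integral>x. b * ln (u x) + c * ln (v x) \<partial>P)"
    unfolding defect_eq using u v int by (simp add: prob_space)
  have defect_nonneg: "AE x in P. 0 \<le> defect x"
    using pos unfolding defect_def
    by eventually_elim (use b c ln_le_minus_one in \<open>auto intro!: add_nonneg_nonneg\<close>)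
  have "b * (\<integral>x. u x \<partial>P) \<le> b" "c * (\<integral>x. v x \<partial>P) \<le> c"
    using mult_left_mono[OF u(2), of b] mult_left_mono[OF v(2), of c] b c by simp_all
  moreover have "0 \<le> (\<integral>x. defect x \<partial>P)" using defect_nonneg by (rule integral_nonneg_AE)
  ultimately have nonpos: "(\<integral>x. b * ln (u x) + c * ln (v x) \<partial>P) \<le> 0"
    and defect_0: "(\<integral>x. b * ln (u x) + c * ln (v x) \<partial>P) = 0 \<Longrightarrow> (\<integral>x. defect x \<partial>P) = 0"
    unfolding integral_defect by linarith+
  show "(\<integral>x. b * ln (u x) + c * ln (v x) \<partial>P) \<le> 0" by (fact nonpos)
  assume "(\<integral>x. b * ln (u x) + c * ln (v x) \<partial>P) = 0"
  then have "(\<integral>x. defect x \<partial>P) = 0" by (rule defect_0)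
  then have "AE x in P. defect x = 0"
    using integral_nonneg_eq_0_iff_AE[OF int_defect defect_nonneg] by simp
  then show "AE x in P. u x = 1 \<and> v x = 1"
    using pos
  proof eventually_elim
    case (elim x)
    have "0 \<le> u x - 1 - ln (u x)" "0 \<le> v x - 1 - ln (v x)"
      using elim ln_le_minus_one by (auto simp: algebra_simps)
    then have "ln (u x) = u x - 1" "ln (v x) = v x - 1"
      using elim b c unfolding defect_def by (smt (verit) mult_pos_pos mult_nonneg_nonneg)+
    then show ?case using elim ln_eq_minus_one by blast
  qed
qed

lemma density_RN_deriv_real:
  assumes "sigma_finite_measure M" "sigma_finite_measure N"
    and "sets N = sets M" "absolutely_continuous M N"
  shows "N = density M (\<lambda>x. ennreal (enn2real (RN_deriv M N x)))"
proof -
  interpret sigma_finite_measure M by fact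
  have "AE x in M. RN_deriv M N x = ennreal (enn2real (RN_deriv M N x))"
    using RN_deriv_finite[OF assms(2) assms(4,3)] by eventually_elim (auto simp: less_top)
  then have "density M (RN_deriv M N) = density M (\<lambda>x. ennreal (enn2real (RN_deriv M N x)))"
    by (intro density_cong) auto
  then show ?thesis using density_RN_deriv[OF assms(4,3)] by simp
qed

lemma kl_div_finiteD:
  assumes "kl_div P Q \<noteq> \<infinity>"
  shows "sets P = sets Q" "absolutely_continuous Q P"
    and "integrable P (\<lambda>x. ln (enn2real (RN_deriv Q P x)))"
    and "kl_div P Q = ereal (\<integral>x. ln (enn2real (RN_deriv Q P x)) \<partial>P)"
  using assms by (auto simp: kl_div_def split: if_splits)

lemma kl_div_density:
  fixes f :: "'a \<Rightarrow> real"
  assumes "sigma_finite_measure Q" and [measurable]: "f \<in> borel_measurable Q"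
    and nonneg: "\<And>x. x \<in> space Q \<Longrightarrow> 0 \<le> f x"
    and P: "P = density Q (\<lambda>x. ennreal (f x))" and int: "integrable P (\<lambda>x. ln (f x))"
  shows "kl_div P Q = ereal (\<integral>x. ln (f x) \<partial>P)"
proof -
  interpret sigma_finite_measure Q by fact
  have sets_P: "sets P = sets Q" using P by simp
  have ac: "absolutely_continuous Q P" unfolding P by (rule absolutely_continuousI_density) simp
  have "AE x in Q. ennreal (f x) = RN_deriv Q P x"
    by (rule RN_deriv_unique) (use P in auto)
  then have "AE x in Q. enn2real (RN_deriv Q P x) = f x"
    using AE_space by eventually_elim (metis enn2real_ennreal nonneg)
  then have ae: "AE x in P. ln (enn2real (RN_deriv Q P x)) = ln (f x)"
    by (auto intro: absolutely_continuous_AE[OF sets_P ac])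
  have [measurable]: "(\<lambda>x. ln (enn2real (RN_deriv Q P x))) \<in> borel_measurable P"
    "(\<lambda>x. ln (f x)) \<in> borel_measurable P"
    by (simp_all add: measurable_cong_sets[OF sets_P refl])
  show ?thesis
    unfolding kl_div_def using sets_P ac int integrable_cong_AE[OF _ _ ae] integral_cong_AE[OF _ _ ae]
    by simp
qed

lemma measurable_kcomp_kernel:
  assumes "K \<in> MA \<rightarrow>\<^sub>M prob_algebra MB"
  shows "(\<lambda>x. distr (K x) (MA \<Otimes>\<^sub>M MB) (Pair x)) \<in> MA \<rightarrow>\<^sub>M prob_algebra (MA \<Otimes>\<^sub>M MB)"
  by (rule measurable_distr_prob_space2[OF assms]) simp

lemma
  assumes "prob_space PX" "sets PX = sets MA" "K \<in> MA \<rightarrow>\<^sub>M prob_algebra MB"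
  shows prob_space_kcomp: "prob_space (kcomp MA MB PX K)"
    and sets_kcomp: "sets (kcomp MA MB PX K) = sets (MA \<Otimes>\<^sub>M MB)"
proof -
  have "PX \<in> space (prob_algebra MA)" using assms(1,2) by (simp add: space_prob_algebra)
  then show "prob_space (kcomp MA MB PX K)" "sets (kcomp MA MB PX K) = sets (MA \<Otimes>\<^sub>M MB)"
    unfolding kcomp_def using measurable_kcomp_kernel[OF assms(3)]
    by (auto intro: prob_space_bind' simp: sets_bind')
qed

lemma tilted_log_identity:
  fixes q r z t a b lam :: real
  assumes pos: "0 < q" "0 < r" "0 < z" and "a + b \<noteq> 0" "lam = a / (a + b)"
    and t: "t = q powr lam * r powr (1 - lam) / z"
  shows "a * ln (t / q) + b * ln (t / r) = - (a + b) * ln z"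
proof -
  have ln_t: "ln t = lam * ln q + (1 - lam) * ln r - ln z"
    unfolding t using assms by (simp add: ln_mult ln_div)
  have weights: "(a + b) * lam = a" "(a + b) * (1 - lam) = b"
    using assms by (simp_all add: field_simps)
  have "0 < t" unfolding t using assms by simp
  then have "a * ln (t / q) + b * ln (t / r) = (a + b) * ln t - a * ln q - b * ln r"
    using pos by (simp add: ln_div algebra_simps)
  also have "\<dots> = ((a + b) * lam - a) * ln q + ((a + b) * (1 - lam) - b) * ln r - (a + b) * ln z"
    unfolding ln_t by (simp add: algebra_simps)
  finally show ?thesis unfolding weights by (simp add: algebra_simps)
qed

lemma nn_integral_fst_distr_Pair:
  assumes sets_N: "sets N = sets MB" and x: "x \<in> space MA"
    and [measurable]: "f \<in> borel_measurable MA" "A \<in> sets (MA \<Otimes>\<^sub>M MB)"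
  shows "(\<integral>\<^sup>+z. f (fst z) * indicator A z \<partial>distr N (MA \<Otimes>\<^sub>M MB) (Pair x))
    = f x * emeasure (distr N (MA \<Otimes>\<^sub>M MB) (Pair x)) A"
proof -
  have [measurable]: "Pair x \<in> N \<rightarrow>\<^sub>M MA \<Otimes>\<^sub>M MB"
    using x by (simp add: measurable_cong_sets[OF sets_N refl])
  have "(\<integral>\<^sup>+z. f (fst z) * indicator A z \<partial>distr N (MA \<Otimes>\<^sub>M MB) (Pair x))
      = (\<integral>\<^sup>+z. f x * indicator A z \<partial>distr N (MA \<Otimes>\<^sub>M MB) (Pair x))"
    by (simp add: nn_integral_distr)
  then show ?thesis by (simp add: nn_integral_cmult_indicator)
qed

lemma density_kcomp:
  assumes K: "K \<in> MA \<rightarrow>\<^sub>M prob_algebra MB"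
    and sets_M: "sets M = sets MA" and nonempty: "space M \<noteq> {}"
    and [measurable]: "phi \<in> borel_measurable MA"
  shows "kcomp MA MB (density M phi) K = density (kcomp MA MB M K) (\<lambda>z. phi (fst z))"
proof -
  define F where "F x = distr (K x) (MA \<Otimes>\<^sub>M MB) (Pair x)" for x
  have "F \<in> MA \<rightarrow>\<^sub>M subprob_algebra (MA \<Otimes>\<^sub>M MB)"
    unfolding F_def by (rule measurable_prob_algebraD[OF measurable_kcomp_kernel[OF K]])
  then have F: "F \<in> M \<rightarrow>\<^sub>M subprob_algebra (MA \<Otimes>\<^sub>M MB)"
    by (simp add: measurable_cong_sets[OF sets_M refl])
  have sets_bind: "sets (M \<bind> F) = sets (MA \<Otimes>\<^sub>M MB)"
    using nonempty by (simp add: F_def)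
  have [measurable]: "phi \<in> borel_measurable M"
    by (simp add: measurable_cong_sets[OF sets_M refl])
  have sets_K: "sets (K x) = sets MB" if "x \<in> space MA" for x
    using measurable_space[OF K that] by (simp add: space_prob_algebra)
  show ?thesis unfolding kcomp_def F_def[symmetric]
  proof (rule measure_eqI)
    fix A assume "A \<in> sets (density M phi \<bind> F)"
    then have A[measurable]: "A \<in> sets (MA \<Otimes>\<^sub>M MB)" using nonempty by (simp add: F_def)
    have "emeasure (density M phi \<bind> F) A = (\<integral>\<^sup>+x. emeasure (F x) A \<partial>density M phi)"
      using nonempty F by (simp add: emeasure_bind)
    also have "\<dots> = (\<integral>\<^sup>+x. phi x * emeasure (F x) A \<partial>M)"
      using F by (subst nn_integral_density) (auto intro: measurable_emeasure_subprob_algebra)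
    also have "\<dots> = (\<integral>\<^sup>+x. \<integral>\<^sup>+z. phi (fst z) * indicator A z \<partial>F x \<partial>M)"
      unfolding F_def using sets_eq_imp_space_eq[OF sets_M]
      by (intro nn_integral_cong) (simp add: nn_integral_fst_distr_Pair sets_K)
    also have "\<dots> = (\<integral>\<^sup>+z. phi (fst z) * indicator A z \<partial>(M \<bind> F))"
      using F by (subst nn_integral_bind[OF _ F]) auto
    also have "\<dots> = emeasure (density (M \<bind> F) (\<lambda>z. phi (fst z))) A"
      using sets_bind by (subst emeasure_density) (auto simp: measurable_cong_sets[OF sets_bind refl])
    finally show "emeasure (density M phi \<bind> F) A = emeasure (density (M \<bind> F) (\<lambda>z. phi (fst z))) A" .
  qed (use nonempty in \<open>simp add: F_def\<close>)
qed

locale weighted_kl_minimization =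
  fixes MA :: "'a measure" and MB :: "'b measure"
    and QX :: "'a measure" and RXY :: "('a \<times> 'b) measure"
    and K :: "'a \<Rightarrow> 'b measure" and T :: "'a measure"
    and a1 a2 lam :: real and mu :: "'a measure" and q r :: "'a \<Rightarrow> real" and z :: real
  assumes QX: "prob_space QX" "sets QX = sets MA"
    and RXY: "prob_space RXY" "sets RXY = sets (MA \<Otimes>\<^sub>M MB)"
    and K: "K \<in> MA \<rightarrow>\<^sub>M prob_algebra MB"
    and cond: "RXY = kcomp MA MB (distr RXY MA fst) K"
    and a: "0 < a1" "0 < a2"
    and lam: "lam = a1 / (a1 + a2)"
    and q_measurable: "q \<in> borel_measurable mu" and r_measurable: "r \<in> borel_measurable mu"
    and nonneg: "\<forall>x\<in>space mu. 0 \<le> q x \<and> 0 \<le> r x"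
    and QX_density: "QX = density mu (\<lambda>x. ennreal (q x))"
    and RX_density: "distr RXY MA fst = density mu (\<lambda>x. ennreal (r x))"
    and z: "ennreal z = (\<integral>\<^sup>+x. ennreal (q x powr lam * r x powr (1 - lam)) \<partial>mu)" "0 < z"
    and T_density: "T = density mu (\<lambda>x. ennreal (q x powr lam * r x powr (1 - lam)) / ennreal z)"
begin

abbreviation "RX \<equiv> distr RXY MA fst"

definition objective :: "('a \<times> 'b) measure \<Rightarrow> ereal" where
  "objective P = ereal a1 * kl_div (distr P MA fst) QX + ereal a2 * kl_div P RXY"

definition t :: "'a \<Rightarrow> real" where "t x = q x powr lam * r x powr (1 - lam) / z"

lemma sets_mu[measurable_cong]: "sets mu = sets MA"
  using QX(2) QX_density by simp

lemma space_mu: "space mu = space MA"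
  using sets_mu by (rule sets_eq_imp_space_eq)

lemmas sets_RXY[measurable_cong] = RXY(2)

lemma space_RXY: "space RXY = space MA \<times> space MB"
  using sets_eq_imp_space_eq[OF RXY(2)] by (simp add: space_pair_measure)

lemma measurable_q_r[measurable]: "q \<in> borel_measurable MA" "r \<in> borel_measurable MA"
  using q_measurable r_measurable by (simp_all add: measurable_cong_sets[OF sets_mu refl])

lemma q_nonneg: "x \<in> space MA \<Longrightarrow> 0 \<le> q x" and r_nonneg: "x \<in> space MA \<Longrightarrow> 0 \<le> r x"
  using nonneg space_mu by auto

lemma measurable_t[measurable]: "t \<in> borel_measurable MA"
  unfolding t_def by measurable

lemma t_nonneg: "x \<in> space MA \<Longrightarrow> 0 \<le> t x"
  unfolding t_def using q_nonneg r_nonneg z(2) by simp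

lemma t_pos_iff: "x \<in> space MA \<Longrightarrow> 0 < t x \<longleftrightarrow> 0 < q x \<and> 0 < r x"
  unfolding t_def using q_nonneg[of x] r_nonneg[of x] z(2)
  by (auto simp: zero_less_mult_iff less_le)

lemma t_pos: "0 < q x \<Longrightarrow> 0 < r x \<Longrightarrow> 0 < t x"
  unfolding t_def using z(2) by simp

lemma t_eq_0: "q x = 0 \<or> r x = 0 \<Longrightarrow> t x = 0"
  unfolding t_def by auto

lemma ln_ratio_identity:
  "0 < q x \<Longrightarrow> 0 < r x \<Longrightarrow> a1 * ln (t x / q x) + a2 * ln (t x / r x) = - (a1 + a2) * ln z"
  using z(2) a lam by (intro tilted_log_identity[OF _ _ _ _ _ t_def]) auto

lemma T_eq_density: "T = density mu (\<lambda>x. ennreal (t x))"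
proof -
  have "(\<lambda>x. ennreal (q x powr lam * r x powr (1 - lam)) / ennreal z) = (\<lambda>x. ennreal (t x))"
  proof
    fix x show "ennreal (q x powr lam * r x powr (1 - lam)) / ennreal z = ennreal (t x)"
      unfolding t_def using z(2) by (intro divide_ennreal) auto
  qed
  then show ?thesis by (subst T_density) (erule arg_cong)
qed

lemma nn_integral_t: "(\<integral>\<^sup>+x. ennreal (t x) \<partial>mu) = 1"
proof -
  have "(\<integral>\<^sup>+x. ennreal (t x) \<partial>mu)
      = (\<integral>\<^sup>+x. ennreal (q x powr lam * r x powr (1 - lam)) * ennreal (1 / z) \<partial>mu)"
    unfolding t_def using z(2) by (auto intro!: nn_integral_cong simp: ennreal_mult'[symmetric])
  also have "\<dots> = ennreal z * ennreal (1 / z)"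
    using z(1) by (simp add: nn_integral_multc)
  also have "\<dots> = 1" using z(2) by (simp add: ennreal_mult'[symmetric])
  finally show ?thesis .
qed

lemma prob_space_T: "prob_space T" and sets_T: "sets T = sets MA"
proof -
  have "emeasure T (space T) = (\<integral>\<^sup>+x. ennreal (t x) \<partial>mu)"
    unfolding T_eq_density by (subst emeasure_density) (auto intro!: nn_integral_cong)
  then show "prob_space T" using nn_integral_t by (intro prob_spaceI) simp
  show "sets T = sets MA" by (simp add: T_eq_density sets_mu)
qed

lemma q_integrable: "integrable mu q" and r_integrable: "integrable mu r"
  using QX(1) RXY(1) nonneg unfolding QX_density
  by (auto intro!: integrable_if_prob_space_density prob_space.prob_space_distr
           simp: RX_density[symmetric])

lemma T_eq_density_QX: "T = density QX (\<lambda>x. ennreal (t x / q x))"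
  unfolding QX_density T_eq_density
  by (rule density_density_divide[symmetric]) (auto simp: space_mu q_nonneg t_eq_0)

lemma T_eq_density_RX: "T = density RX (\<lambda>x. ennreal (t x / r x))"
  unfolding RX_density T_eq_density
  by (rule density_density_divide[symmetric]) (auto simp: space_mu r_nonneg t_eq_0)

lemma AE_T_pos: "AE x in T. 0 < q x \<and> 0 < r x"
  unfolding T_eq_density by (subst AE_density) (auto simp: space_mu t_pos_iff)

lemma AE_T_ln_ratio_identity:
  "AE x in T. a1 * ln (t x / q x) + a2 * ln (t x / r x) = - (a1 + a2) * ln z"
  using AE_T_pos by eventually_elim (rule ln_ratio_identity; simp)

lemma integrable_T_ln_ratio:
  "integrable T (\<lambda>x. ln (t x / q x))" "integrable T (\<lambda>x. ln (t x / r x))"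
proof -
  interpret prob_space T by (rule prob_space_T)
  have ratios: "integrable T (\<lambda>x. q x / t x)" "integrable T (\<lambda>x. r x / t x)"
    unfolding T_eq_density using q_integrable r_integrable
    by (auto intro!: integrable_density_divide simp: space_mu q_nonneg r_nonneg t_nonneg)
  have ln_ge: "1 - y / x \<le> ln (x / y)" if "0 < x" "0 < y" for x y :: real
    using ln_le_minus_one[of "y / x"] that by (simp add: ln_div)
  have lower_q: "AE x in T. 1 - q x / t x \<le> ln (t x / q x)"
    using AE_T_pos by eventually_elim (simp add: ln_ge t_pos)
  have lower_r: "AE x in T. 1 - r x / t x \<le> ln (t x / r x)"
    using AE_T_pos by eventually_elim (simp add: ln_ge t_pos)
  have bounds_integrable: "integrable T (\<lambda>x. 1 - q x / t x)" "integrable T (\<lambda>x. 1 - r x / t x)"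
    using ratios by auto
  have affine': "AE x in T. a2 * ln (t x / r x) + a1 * ln (t x / q x) = - (a1 + a2) * ln z"
    using AE_T_ln_ratio_identity by eventually_elim linarith
  show "integrable T (\<lambda>x. ln (t x / q x))"
    by (rule integrable_if_bounded_below_and_affine_sum[OF finite_measure_axioms _
          bounds_integrable lower_q lower_r a AE_T_ln_ratio_identity])
      (simp add: measurable_cong_sets[OF sets_T refl])
  show "integrable T (\<lambda>x. ln (t x / r x))"
    by (rule integrable_if_bounded_below_and_affine_sum[OF finite_measure_axioms _
          bounds_integrable(2,1) lower_r lower_q a(2,1) affine'])
      (simp add: measurable_cong_sets[OF sets_T refl])
qed

lemma space_MA_nonempty: "space MA \<noteq> {}"
  using prob_space.not_empty[OF prob_space_T] sets_eq_imp_space_eq[OF sets_T] by simp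

lemma kcomp_T_eq_density: "kcomp MA MB T K = density RXY (\<lambda>w. ennreal (t (fst w) / r (fst w)))"
proof -
  have "kcomp MA MB T K = density (kcomp MA MB RX K) (\<lambda>w. ennreal (t (fst w) / r (fst w)))"
    unfolding T_eq_density_RX using space_MA_nonempty by (intro density_kcomp[OF K]) auto
  then show ?thesis using cond by simp
qed

lemma marginal_kcomp_T: "distr (kcomp MA MB T K) MA fst = T"
proof -
  have "distr (kcomp MA MB T K) MA fst = density RX (\<lambda>x. ennreal (t x / r x))"
    unfolding kcomp_T_eq_density by (subst density_distr) auto
  then show ?thesis using T_eq_density_RX by simp
qed

lemma prob_space_kcomp_T: "prob_space (kcomp MA MB T K)"
  and sets_kcomp_T[measurable_cong]: "sets (kcomp MA MB T K) = sets (MA \<Otimes>\<^sub>M MB)"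
  using prob_space_kcomp sets_kcomp prob_space_T sets_T K by blast+

lemma kl_div_T_QX: "kl_div T QX = ereal (\<integral>x. ln (t x / q x) \<partial>T)"
proof (rule kl_div_density[OF prob_space_imp_sigma_finite[OF QX(1)] _ _ T_eq_density_QX
      integrable_T_ln_ratio(1)])
  show "(\<lambda>x. t x / q x) \<in> borel_measurable QX"
    by (simp add: measurable_cong_sets[OF QX(2) refl])
qed (simp add: sets_eq_imp_space_eq[OF QX(2)] q_nonneg t_nonneg)

lemma kl_div_kcomp_T_RXY: "kl_div (kcomp MA MB T K) RXY = ereal (\<integral>x. ln (t x / r x) \<partial>T)"
proof -
  have "integrable (distr (kcomp MA MB T K) MA fst) (\<lambda>x. ln (t x / r x))"
    using integrable_T_ln_ratio(2) marginal_kcomp_T by simp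
  then have integrable_kcomp: "integrable (kcomp MA MB T K) (\<lambda>w. ln (t (fst w) / r (fst w)))"
    by (subst (asm) integrable_distr_eq) auto
  have "kl_div (kcomp MA MB T K) RXY = ereal (\<integral>w. ln (t (fst w) / r (fst w)) \<partial>kcomp MA MB T K)"
  proof (rule kl_div_density[OF prob_space_imp_sigma_finite[OF RXY(1)] _ _ kcomp_T_eq_density
        integrable_kcomp])
    show "(\<lambda>w. t (fst w) / r (fst w)) \<in> borel_measurable RXY" by simp
  qed (auto simp: space_RXY r_nonneg t_nonneg)
  also have "(\<integral>w. ln (t (fst w) / r (fst w)) \<partial>kcomp MA MB T K) = (\<integral>x. ln (t x / r x) \<partial>T)"
    by (subst marginal_kcomp_T[symmetric], subst integral_distr) auto
  finally show ?thesis .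
qed

lemma objective_kcomp_T: "objective (kcomp MA MB T K) = ereal (- (a1 + a2) * ln z)"
proof -
  interpret prob_space T by (rule prob_space_T)
  have "a1 * (\<integral>x. ln (t x / q x) \<partial>T) + a2 * (\<integral>x. ln (t x / r x) \<partial>T)
      = (\<integral>x. a1 * ln (t x / q x) + a2 * ln (t x / r x) \<partial>T)"
    using integrable_T_ln_ratio by simp
  also have "\<dots> = (\<integral>x. - (a1 + a2) * ln z \<partial>T)"
    using AE_T_ln_ratio_identity
    by (intro integral_cong_AE) (simp_all add: measurable_cong_sets[OF sets_T refl])
  finally show ?thesis
    unfolding objective_def marginal_kcomp_T kl_div_T_QX kl_div_kcomp_T_RXY by (simp add: prob_space)
qed

lemma marginal_eq_T_if_AE_eq:
  fixes s :: "'a \<Rightarrow> real"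
  assumes [measurable]: "s \<in> borel_measurable MA"
    and prob: "prob_space (density mu (\<lambda>x. ennreal (s x)))"
    and eq: "AE x in density mu (\<lambda>x. ennreal (s x)). s x = t x"
  shows "density mu (\<lambda>x. ennreal (s x)) = T"
proof -
  have "AE x in mu. ennreal (s x) \<le> ennreal (t x)"
    using eq by (subst (asm) AE_density) (auto elim!: eventually_mono simp: not_less ennreal_neg)
  then show ?thesis
    unfolding T_eq_density using prob nn_integral_t by (intro density_eq_if_AE_le) auto
qed

lemma kcomp_marginal_if_AE_density_factors:
  fixes h :: "'a \<times> 'b \<Rightarrow> real" and g :: "'a \<Rightarrow> real"
  assumes P: "prob_space P" and P_density: "P = density RXY (\<lambda>w. ennreal (h w))"
    and [measurable]: "h \<in> borel_measurable (MA \<Otimes>\<^sub>M MB)" "g \<in> borel_measurable MA"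
    and g_le_1: "(\<integral>\<^sup>+w. ennreal (g (fst w)) \<partial>RXY) \<le> 1"
    and factors: "AE w in P. h w = g (fst w)"
  shows "P = kcomp MA MB (distr P MA fst) K"
proof -
  have "AE w in RXY. ennreal (h w) \<le> ennreal (g (fst w))"
    using factors unfolding P_density
    by (subst (asm) AE_density) (auto elim!: eventually_mono simp: not_less ennreal_neg)
  then have P_eq: "P = density RXY (\<lambda>w. ennreal (g (fst w)))"
    unfolding P_density using P P_density g_le_1 by (intro density_eq_if_AE_le) auto
  then have "distr P MA fst = density RX (\<lambda>x. ennreal (g x))"
    by (simp add: density_distr)
  moreover have "density (kcomp MA MB RX K) (\<lambda>w. ennreal (g (fst w)))
      = kcomp MA MB (density RX (\<lambda>x. ennreal (g x))) K"
    using space_MA_nonempty by (intro density_kcomp[OF K, symmetric]) auto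
  ultimately show ?thesis using P_eq cond by simp
qed

lemma ln_density_ratio_identity:
  assumes "0 < q x" "0 < p" "0 < r x" "0 < h"
  shows "a2 * ln (q x * p / r x / h) + (a1 + a2) * ln (t x / (q x * p))
    = - (a1 + a2) * ln z - (a1 * ln p + a2 * ln h)"
  using ln_ratio_identity[OF assms(1,3)] t_pos[OF assms(1,3)] assms
  by (simp add: ln_div ln_mult algebra_simps)

end

locale weighted_kl_candidate = weighted_kl_minimization +
  fixes P :: "('a \<times> 'b) measure" and p :: "'a \<Rightarrow> real" and h :: "'a \<times> 'b \<Rightarrow> real"
  assumes prob_space_P: "prob_space P"
    and measurable_p[measurable]: "p \<in> borel_measurable MA"
    and measurable_h[measurable]: "h \<in> borel_measurable (MA \<Otimes>\<^sub>M MB)"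
    and p_nonneg: "\<And>x. 0 \<le> p x" and h_nonneg: "\<And>w. 0 \<le> h w"
    and PX_density: "distr P MA fst = density QX (\<lambda>x. ennreal (p x))"
    and P_density: "P = density RXY (\<lambda>w. ennreal (h w))"
begin

text \<open>\<open>dPX\<close> is the density of \<open>P\<^sub>X\<close> with respect to \<open>mu\<close>, and \<open>dPX / r\<close> the one with respect to
  \<open>R\<^sub>X\<close>. Gibbs' inequality is applied to the ratios \<open>u\<close> and \<open>v\<close>: \<open>u = 1\<close> says that \<open>dP/dR\<^sub>X\<^sub>Y\<close>
  depends on \<open>x\<close> only, and \<open>v = 1\<close> that \<open>P\<^sub>X = T\<close>.\<close>

definition dPX :: "'a \<Rightarrow> real" where "dPX x = q x * p x"

definition u :: "'a \<times> 'b \<Rightarrow> real" where "u w = dPX (fst w) / r (fst w) / h w"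

definition v :: "'a \<Rightarrow> real" where "v x = t x / dPX x"

lemma sets_P[measurable_cong]: "sets P = sets (MA \<Otimes>\<^sub>M MB)"
  using P_density RXY(2) by simp

lemma measurable_dPX[measurable]: "dPX \<in> borel_measurable MA"
  unfolding dPX_def by measurable

lemma dPX_nonneg: "x \<in> space MA \<Longrightarrow> 0 \<le> dPX x"
  unfolding dPX_def using q_nonneg p_nonneg by simp

lemma PX_eq_density_mu: "distr P MA fst = density mu (\<lambda>x. ennreal (dPX x))"
  unfolding PX_density QX_density dPX_def using p_nonneg
  by (subst density_density_eq) (auto simp: ennreal_mult'')

lemma prob_space_density_dPX: "prob_space (density mu (\<lambda>x. ennreal (dPX x)))"
  unfolding PX_eq_density_mu[symmetric] by (rule prob_space.prob_space_distr[OF prob_space_P]) simp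

lemma AE_P_pos: "AE w in P. 0 < q (fst w) \<and> 0 < p (fst w) \<and> 0 < r (fst w) \<and> 0 < h w"
proof -
  have "AE x in RX. 0 < r x"
    unfolding RX_density by (subst AE_density) auto
  then have "AE w in P. 0 < r (fst w)"
    unfolding P_density by (subst AE_density) (auto simp: AE_distr_iff elim!: eventually_mono)
  moreover have "AE x in distr P MA fst. 0 < dPX x"
    unfolding PX_eq_density_mu by (subst AE_density) auto
  then have "AE w in P. 0 < dPX (fst w)"
    by (subst (asm) AE_distr_iff) auto
  moreover have "AE w in P. 0 < h w"
    unfolding P_density by (subst AE_density) auto
  ultimately show ?thesis
  proof eventually_elim
    case (elim w)
    then show ?case using p_nonneg[of "fst w"] by (auto simp: dPX_def zero_less_mult_iff)
  qed
qed

lemma nn_integral_dPX_over_r_le_1: "(\<integral>\<^sup>+w. ennreal (dPX (fst w) / r (fst w)) \<partial>RXY) \<le> 1"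
proof -
  have "(\<integral>\<^sup>+w. ennreal (dPX (fst w) / r (fst w)) \<partial>RXY) = (\<integral>\<^sup>+x. ennreal (dPX x / r x) \<partial>RX)"
    by (simp add: nn_integral_distr)
  also have "\<dots> \<le> (\<integral>\<^sup>+x. ennreal (dPX x) \<partial>mu)"
    unfolding RX_density
    by (rule nn_integral_density_divide_le) (auto simp: space_mu r_nonneg dPX_nonneg)
  also have "\<dots> = 1"
    using prob_space.emeasure_space_1[OF prob_space_density_dPX]
    by (simp add: emeasure_density cong: nn_integral_cong)
  finally show ?thesis .
qed

lemma nn_integral_u_le_1: "(\<integral>\<^sup>+w. ennreal (u w) \<partial>P) \<le> 1"
proof -
  have "(\<integral>\<^sup>+w. ennreal (u w) \<partial>P) \<le> (\<integral>\<^sup>+w. ennreal (dPX (fst w) / r (fst w)) \<partial>RXY)"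
    unfolding u_def P_density
    by (rule nn_integral_density_divide_le) (auto simp: space_RXY h_nonneg r_nonneg dPX_nonneg)
  then show ?thesis using nn_integral_dPX_over_r_le_1 by simp
qed

lemma nn_integral_v_le_1: "(\<integral>\<^sup>+w. ennreal (v (fst w)) \<partial>P) \<le> 1"
proof -
  have "(\<integral>\<^sup>+w. ennreal (v (fst w)) \<partial>P) = (\<integral>\<^sup>+x. ennreal (t x / dPX x) \<partial>distr P MA fst)"
    unfolding v_def by (simp add: nn_integral_distr)
  also have "\<dots> \<le> (\<integral>\<^sup>+x. ennreal (t x) \<partial>mu)"
    unfolding PX_eq_density_mu
    by (rule nn_integral_density_divide_le) (auto simp: space_mu dPX_nonneg t_nonneg)
  finally show ?thesis using nn_integral_t by simp
qed

lemma AE_P_ln_u_v: "AE w in P. a2 * ln (u w) + (a1 + a2) * ln (v (fst w))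
    = - (a1 + a2) * ln z - (a1 * ln (p (fst w)) + a2 * ln (h w))"
  using AE_P_pos unfolding u_def v_def dPX_def
  by eventually_elim (rule ln_density_ratio_identity; simp)

lemma integral_bound:
  assumes int: "integrable P (\<lambda>w. a1 * ln (p (fst w)) + a2 * ln (h w))"
  shows "- (a1 + a2) * ln z \<le> (\<integral>w. a1 * ln (p (fst w)) + a2 * ln (h w) \<partial>P)"
    and "(\<integral>w. a1 * ln (p (fst w)) + a2 * ln (h w) \<partial>P) \<le> - (a1 + a2) * ln z \<Longrightarrow>
      AE w in P. u w = 1 \<and> v (fst w) = 1"
proof -
  interpret P: prob_space P by (rule prob_space_P)
  have "integrable P (\<lambda>w. - (a1 + a2) * ln z - (a1 * ln (p (fst w)) + a2 * ln (h w)))"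
    using int by simp
  then have int_uv: "integrable P (\<lambda>w. a2 * ln (u w) + (a1 + a2) * ln (v (fst w)))"
    by (rule integrable_cong_AE_imp) (use AE_P_ln_u_v in \<open>auto simp: u_def v_def elim: eventually_mono\<close>)
  have integral_uv: "(\<integral>w. a2 * ln (u w) + (a1 + a2) * ln (v (fst w)) \<partial>P)
      = - (a1 + a2) * ln z - (\<integral>w. a1 * ln (p (fst w)) + a2 * ln (h w) \<partial>P)"
    using int AE_P_ln_u_v
    by (subst integral_cong_AE[where g = "\<lambda>w. - (a1 + a2) * ln z - (a1 * ln (p (fst w)) + a2 * ln (h w))"])
      (auto simp: u_def v_def P.prob_space)
  have pos: "AE w in P. 0 < u w \<and> 0 < v (fst w)"
    using AE_P_pos by eventually_elim (simp add: u_def v_def dPX_def t_pos)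
  have "u \<in> borel_measurable P" "(\<lambda>w. v (fst w)) \<in> borel_measurable P"
    unfolding u_def v_def by simp_all
  note gibbs = gibbs_inequality_two_densities[OF prob_space_P this pos nn_integral_u_le_1
      nn_integral_v_le_1 a(2) add_pos_pos[OF a] int_uv]
  show lower: "- (a1 + a2) * ln z \<le> (\<integral>w. a1 * ln (p (fst w)) + a2 * ln (h w) \<partial>P)"
    using gibbs(1) unfolding integral_uv by simp
  assume "(\<integral>w. a1 * ln (p (fst w)) + a2 * ln (h w) \<partial>P) \<le> - (a1 + a2) * ln z"
  then have "(\<integral>w. a2 * ln (u w) + (a1 + a2) * ln (v (fst w)) \<partial>P) = 0"
    using lower unfolding integral_uv by simp
  then show "AE w in P. u w = 1 \<and> v (fst w) = 1"
    by (rule gibbs(2))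
qed

lemma eq_kcomp_T_if_AE_u_v_1:
  assumes ones: "AE w in P. u w = 1 \<and> v (fst w) = 1"
  shows "P = kcomp MA MB T K"
proof -
  have "AE w in P. dPX (fst w) = t (fst w)"
    using ones AE_P_pos by eventually_elim (auto simp: v_def dPX_def)
  then have "AE x in distr P MA fst. dPX x = t x"
    by (subst AE_distr_iff) auto
  then have marginal: "distr P MA fst = T"
    unfolding PX_eq_density_mu by (intro marginal_eq_T_if_AE_eq prob_space_density_dPX) auto
  have "AE w in P. h w = dPX (fst w) / r (fst w)"
    using ones AE_P_pos by eventually_elim (auto simp: u_def field_simps)
  then have "P = kcomp MA MB (distr P MA fst) K"
    by (intro kcomp_marginal_if_AE_density_factors[OF prob_space_P P_density _ _
          nn_integral_dPX_over_r_le_1]) auto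
  then show ?thesis unfolding marginal .
qed

end

context weighted_kl_minimization
begin

lemma objective_eq_infinity:
  assumes "kl_div (distr P MA fst) QX = \<infinity> \<or> kl_div P RXY = \<infinity>"
  shows "objective P = \<infinity>"
proof -
  have "kl_div X Y \<noteq> - \<infinity>" for X Y :: "'c measure"
    by (simp add: kl_div_def)
  then show ?thesis
    using assms a unfolding objective_def
    by (cases "kl_div (distr P MA fst) QX"; cases "kl_div P RXY") auto
qed

lemma objective_lower_bound_finite:
  assumes P: "prob_space P" "sets P = sets (MA \<Otimes>\<^sub>M MB)"
    and finite: "kl_div (distr P MA fst) QX \<noteq> \<infinity>" "kl_div P RXY \<noteq> \<infinity>"
  shows "ereal (- (a1 + a2) * ln z) \<le> objective P"
    and "objective P \<le> ereal (- (a1 + a2) * ln z) \<Longrightarrow> P = kcomp MA MB T K"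
proof -
  interpret P: prob_space P by (fact P(1))
  have [measurable_cong]: "sets P = sets (MA \<Otimes>\<^sub>M MB)" by (fact P(2))
  define p where "p x = enn2real (RN_deriv QX (distr P MA fst) x)" for x
  define h where "h w = enn2real (RN_deriv RXY P w)" for w
  have "p \<in> borel_measurable QX" "h \<in> borel_measurable RXY"
    unfolding p_def h_def by measurable
  then have measurable_p_h[measurable]: "p \<in> borel_measurable MA" "h \<in> borel_measurable (MA \<Otimes>\<^sub>M MB)"
    unfolding measurable_cong_sets[OF QX(2) refl] measurable_cong_sets[OF RXY(2) refl] .
  note kl_PX = kl_div_finiteD[OF finite(1), folded p_def]
  note kl_P = kl_div_finiteD[OF finite(2), folded h_def]
  have "prob_space (distr P MA fst)" by (rule P.prob_space_distr) simp
  then have PX_density: "distr P MA fst = density QX (\<lambda>x. ennreal (p x))"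
    unfolding p_def using QX kl_PX(1,2)
    by (intro density_RN_deriv_real) (auto intro: prob_space_imp_sigma_finite)
  have P_density: "P = density RXY (\<lambda>w. ennreal (h w))"
    unfolding h_def using RXY kl_P(1,2) P
    by (intro density_RN_deriv_real) (auto intro: prob_space_imp_sigma_finite)
  have int_p: "integrable P (\<lambda>w. ln (p (fst w)))"
    using kl_PX(3) by (subst (asm) integrable_distr_eq) auto
  then have int: "integrable P (\<lambda>w. a1 * ln (p (fst w)) + a2 * ln (h w))"
    using kl_P(3) by simp
  have objective_P: "objective P = ereal (\<integral>w. a1 * ln (p (fst w)) + a2 * ln (h w) \<partial>P)"
    unfolding objective_def kl_PX(4) kl_P(4) using int_p kl_P(3) by (simp add: integral_distr)
  interpret candidate: weighted_kl_candidate MA MB QX RXY K T a1 a2 lam mu q r z P p h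
    by (intro weighted_kl_candidate.intro weighted_kl_minimization_axioms
        weighted_kl_candidate_axioms.intro P(1) measurable_p_h PX_density P_density)
      (simp_all add: p_def h_def)
  show "ereal (- (a1 + a2) * ln z) \<le> objective P"
    using candidate.integral_bound(1)[OF int] objective_P by simp
  show "objective P \<le> ereal (- (a1 + a2) * ln z) \<Longrightarrow> P = kcomp MA MB T K"
    using candidate.integral_bound(2)[OF int] candidate.eq_kcomp_T_if_AE_u_v_1 objective_P by simp
qed

lemma objective_lower_bound:
  assumes "prob_space P" "sets P = sets (MA \<Otimes>\<^sub>M MB)"
  shows "ereal (- (a1 + a2) * ln z) \<le> objective P"
    and "objective P \<le> ereal (- (a1 + a2) * ln z) \<Longrightarrow> P = kcomp MA MB T K"
  using objective_lower_bound_finite[OF assms] objective_eq_infinity[of P] by fastforce+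

lemma argmin_objective:
  "{P. prob_space P \<and> sets P = sets (MA \<Otimes>\<^sub>M MB) \<and>
      (\<forall>P'. prob_space P' \<and> sets P' = sets (MA \<Otimes>\<^sub>M MB) \<longrightarrow> objective P \<le> objective P')}
    = {kcomp MA MB T K}"
proof (intro set_eqI iffI)
  fix P assume "P \<in> {P. prob_space P \<and> sets P = sets (MA \<Otimes>\<^sub>M MB) \<and>
      (\<forall>P'. prob_space P' \<and> sets P' = sets (MA \<Otimes>\<^sub>M MB) \<longrightarrow> objective P \<le> objective P')}"
  then have P: "prob_space P" "sets P = sets (MA \<Otimes>\<^sub>M MB)"
    and "objective P \<le> objective (kcomp MA MB T K)"
    using prob_space_kcomp_T sets_kcomp_T by auto
  then show "P \<in> {kcomp MA MB T K}"
    using objective_lower_bound(2)[OF P] objective_kcomp_T by simp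
next
  fix P assume "P \<in> {kcomp MA MB T K}"
  then show "P \<in> {P. prob_space P \<and> sets P = sets (MA \<Otimes>\<^sub>M MB) \<and>
      (\<forall>P'. prob_space P' \<and> sets P' = sets (MA \<Otimes>\<^sub>M MB) \<longrightarrow> objective P \<le> objective P')}"
    using objective_lower_bound(1) prob_space_kcomp_T sets_kcomp_T objective_kcomp_T by auto
qed

end

theorem proposition6:
  fixes MA :: "'a measure" and MB :: "'b measure"
    and QX :: "'a measure" and RXY :: "('a \<times> 'b) measure"
    and K :: "'a \<Rightarrow> 'b measure" and T :: "'a measure"
    and a1 a2 :: real
  assumes QX: "prob_space QX" "sets QX = sets MA"
    and RXY: "prob_space RXY" "sets RXY = sets (MA \<Otimes>\<^sub>M MB)"
    and K: "K \<in> MA \<rightarrow>\<^sub>M prob_algebra MB"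
    and cond: "RXY = kcomp MA MB (distr RXY MA fst) K"
    and a: "a1 > 0" "a2 > 0"
    and T: "tilted (a1 / (a1 + a2)) QX (distr RXY MA fst) T"
  shows "{P. prob_space P \<and> sets P = sets (MA \<Otimes>\<^sub>M MB) \<and>
             (\<forall>P'. prob_space P' \<and> sets P' = sets (MA \<Otimes>\<^sub>M MB) \<longrightarrow>
                ereal a1 * kl_div (distr P MA fst) QX + ereal a2 * kl_div P RXY
                \<le> ereal a1 * kl_div (distr P' MA fst) QX + ereal a2 * kl_div P' RXY)}
         = {kcomp MA MB T K}"
proof -
  let ?lam = "a1 / (a1 + a2)"
  obtain mu q r Z where
    q: "q \<in> borel_measurable mu" and r: "r \<in> borel_measurable mu"
    and nonneg: "\<forall>x\<in>space mu. 0 \<le> q x \<and> 0 \<le> r x"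
    and QX_density: "QX = density mu (\<lambda>x. ennreal (q x))"
    and RX_density: "distr RXY MA fst = density mu (\<lambda>x. ennreal (r x))"
    and Z: "Z = (\<integral>\<^sup>+x. ennreal (q x powr ?lam * r x powr (1 - ?lam)) \<partial>mu)" "0 < Z" "Z < \<infinity>"
    and T_density: "T = density mu (\<lambda>x. ennreal (q x powr ?lam * r x powr (1 - ?lam)) / Z)"
    using T unfolding tilted_def Let_def by (elim exE conjE) (rule that[OF _ _ _ _ _ refl])
  have Z_eq: "ennreal (enn2real Z) = Z" and "0 < enn2real Z"
    using Z(2,3) by (auto simp: less_top[symmetric] enn2real_positive_iff)
  interpret weighted_kl_minimization MA MB QX RXY K T a1 a2 ?lam mu q r "enn2real Z"
    by (rule weighted_kl_minimization.intro[OF QX RXY K cond a refl q r nonneg QX_density RX_density];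
        (simp only: Z_eq)?; fact Z(1) \<open>0 < enn2real Z\<close> T_density)
  show ?thesis using argmin_objective unfolding objective_def .
qed

end
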